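(* Let $M\subset\mathbb{C}^N\subset\mathbb{C}\mathbb{P}^N$ be a strictly $\mathbb{C}$-convex real hypersurface (of class $C^h$, $h\geq 2$). Then the complex dual map $\nu\colon M\to\mathbb{C}\mathbb{P}^{N*}$ is a local embedding.
   Context: For a real hypersurface $M\subset\mathbb{C}^N$ and $x\in M$, $D_x=T_xM\cap JT_xM$ is the complex tangent hyperplane. $M$ is strictly $\mathbb{C}$-convex if at every point $x$ the restriction to $D_x$ of the shape operator (second fundamental form) of $M$ is strictly positive definite (for a suitable choice of unit normal, e.g. the inward normal when $M$ bounds a domain). The complex dual map sends $x\in M$ to the projective hyperplane of $\mathbb{C}\mathbb{P}^N$ which is the closure of the complex affine hyperplane $x+D_x$, viewed as a point of the dual projective space $\mathbb{C}\mathbb{P}^{N*}$. *)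

theory Defs
  imports "HOL-Analysis.Analysis"
begin

text \<open>Complex affine space C^N is modelled as complex ^ 'n (N = CARD('n)),
viewed as a real Euclidean space of real dimension 2N with the standard inner product.\<close>

definition C2_on :: "('a::euclidean_space) set \<Rightarrow> ('a \<Rightarrow> real) \<Rightarrow> bool" where
  "C2_on U \<rho> \<longleftrightarrow> (\<exists>\<rho>' :: 'a \<Rightarrow> ('a \<Rightarrow>\<^sub>L real). \<exists>\<rho>'' :: 'a \<Rightarrow> ('a \<Rightarrow>\<^sub>L ('a \<Rightarrow>\<^sub>L real)).
      (\<forall>y\<in>U. (\<rho> has_derivative blinfun_apply (\<rho>' y)) (at y)) \<and>
      (\<forall>y\<in>U. (\<rho>' has_derivative blinfun_apply (\<rho>'' y)) (at y)) \<and>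
      continuous_on U \<rho>'')"

definition real_hypersurface :: "('a::euclidean_space) set \<Rightarrow> bool" where
  "real_hypersurface M \<longleftrightarrow> (\<forall>x\<in>M. \<exists>U \<rho>. open U \<and> x \<in> U \<and> C2_on U \<rho> \<and>
      M \<inter> U = {y\<in>U. \<rho> y = 0} \<and>
      (\<forall>y\<in>M \<inter> U. \<exists>L. (\<rho> has_derivative L) (at y) \<and> L \<noteq> (\<lambda>_. 0)))"

definition tangent_space :: "('a::real_normed_vector) set \<Rightarrow> 'a \<Rightarrow> 'a set" where
  "tangent_space M x = {v. \<exists>\<gamma> e. e > 0 \<and> \<gamma> 0 = x \<and> (\<forall>t. \<bar>t\<bar> < e \<longrightarrow> \<gamma> t \<in> M) \<and>
      (\<gamma> has_vector_derivative v) (at 0)}"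

definition Jmul :: "complex ^ 'n \<Rightarrow> complex ^ 'n" where
  "Jmul v = (\<chi> j. \<i> * v $ j)"

definition complex_tangent :: "(complex ^ 'n) set \<Rightarrow> complex ^ 'n \<Rightarrow> (complex ^ 'n) set" where
  "complex_tangent M x = tangent_space M x \<inter> Jmul ` tangent_space M x"

text \<open>Strict C-convexity: at every point, for a suitable (local) unit normal field n,
the shape operator S = -Dn restricted to D_x is positive definite.\<close>
definition strictly_C_convex :: "(complex ^ 'n) set \<Rightarrow> bool" where
  "strictly_C_convex M \<longleftrightarrow> real_hypersurface M \<and>
     (\<forall>x\<in>M. \<exists>V n Dn. open V \<and> x \<in> V \<and>
        (\<forall>y\<in>M \<inter> V. norm (n y) = 1 \<and> (\<forall>w\<in>tangent_space M y. n y \<bullet> w = 0)) \<and>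
        (n has_derivative Dn) (at x within M \<inter> V) \<and>
        (\<forall>v\<in>complex_tangent M x. v \<noteq> 0 \<longrightarrow> - (Dn v \<bullet> v) > 0))"

text \<open>Its closure in CP^N
is the point of the dual projective space; closure is injective on affine hyperplanes,
so we identify the point of CP^N* with the affine hyperplane itself.\<close>
definition complex_dual :: "(complex ^ 'n) set \<Rightarrow> complex ^ 'n \<Rightarrow> (complex ^ 'n) set" where
  "complex_dual M x = (\<lambda>v. x + v) ` complex_tangent M x"

text \<open>Standard affine charts of CP^N*: hyperplanes {z. a.z + b = 0} with a_k \<noteq> 0 get the
coordinates c_j = a_j / a_k (j \<noteq> k), c_k = b / a_k.\<close>
definition is_chart_coord :: "'n \<Rightarrow> (complex ^ 'n) set \<Rightarrow> complex ^ 'n \<Rightarrow> bool" where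
  "is_chart_coord k H c \<longleftrightarrow>
     H = {z. z $ k + (\<Sum>j\<in>UNIV - {k}. c $ j * z $ j) + c $ k = 0}"

definition chart_dom :: "'n \<Rightarrow> (complex ^ 'n) set set" where
  "chart_dom k = {H. \<exists>c. is_chart_coord k H c}"

definition dual_chart :: "'n \<Rightarrow> (complex ^ 'n) set \<Rightarrow> complex ^ 'n" where
  "dual_chart k H = (THE c. is_chart_coord k H c)"

definition local_embedding_dual :: "(complex ^ 'n) set \<Rightarrow> (complex ^ 'n \<Rightarrow> (complex ^ 'n) set) \<Rightarrow> bool" where
  "local_embedding_dual M f \<longleftrightarrow> (\<forall>x\<in>M. \<exists>V k. open V \<and> x \<in> V \<and>
      (\<forall>y\<in>M \<inter> V. f y \<in> chart_dom k) \<and>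
      (let g = dual_chart k \<circ> f in
        inj_on g (M \<inter> V) \<and>
        continuous_on (M \<inter> V) g \<and>
        continuous_on (g ` (M \<inter> V)) (inv_into (M \<inter> V) g) \<and>
        (\<forall>y\<in>M \<inter> V. \<exists>L. (g has_derivative L) (at y within M) \<and>
                        inj_on L (tangent_space M y))))"

end

theory Submission
  imports Defs
begin

text \<open>Near a point \<open>x\<close> of \<open>M\<close> write \<open>M = {\<rho> = 0}\<close> with \<open>d\<rho> \<noteq> 0\<close>, and let \<open>a(y)\<close> be the
  coefficient vector with \<open>d\<rho>\<^sub>y v = Re (\<Sum>j. a\<^sub>j(y) v\<^sub>j)\<close>. Then \<open>D\<^sub>y = {v. \<Sum>j. a\<^sub>j(y) v\<^sub>j = 0}\<close>,
  and if \<open>a\<^sub>k(x) \<noteq> 0\<close> the dual map reads, in the \<open>k\<close>-th affine chart of the dual projective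
  space, \<open>y \<mapsto> (a\<^sub>j(y) / a\<^sub>k(y))\<^sub>j\<^sub>\<noteq>\<^sub>k\<close> together with \<open>-(\<Sum>j. a\<^sub>j(y) y\<^sub>j) / a\<^sub>k(y)\<close>.
  If its differential kills a tangent vector \<open>h\<close>, then \<open>h \<in> D\<^sub>y\<close> and the derivative of \<open>a\<close>
  along \<open>h\<close> is a multiple of \<open>a(y)\<close>, so the Hessian of \<open>\<rho>\<close> vanishes on \<open>(h, h)\<close>. Since the
  unit normal is proportional to \<open>\<nabla>\<rho>\<close>, the second fundamental form then vanishes on \<open>h\<close>,
  which strict \<open>\<complex>\<close>-convexity allows only for \<open>h = 0\<close>. With \<open>\<rho>\<close> adjoined as an extra
  coordinate the chart map has injective differential at \<open>x\<close>, hence is injective near \<open>x\<close>;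
  continuity of the inverse comes from compactness of small closed pieces of \<open>M\<close>.\<close>

section \<open>Tangent spaces of regular level sets\<close>

lemma tangent_space_curve_within:
  assumes "v \<in> tangent_space M y" and "open U" and "y \<in> U"
  obtains \<gamma> e where "e > 0" "\<gamma> 0 = y" "\<And>t. \<bar>t\<bar> < e \<Longrightarrow> \<gamma> t \<in> M \<inter> U"
    and "(\<gamma> has_vector_derivative v) (at 0)"
proof -
  obtain \<gamma> e where e: "e > 0" "\<gamma> 0 = y" "\<And>t. \<bar>t\<bar> < e \<Longrightarrow> \<gamma> t \<in> M"
    and \<gamma>: "(\<gamma> has_vector_derivative v) (at 0)"
    using assms(1) unfolding tangent_space_def by blast
  have "isCont \<gamma> 0"
    using \<gamma> by (rule has_vector_derivative_continuous)
  then have "\<forall>\<^sub>F t in nhds 0. \<gamma> t \<in> U"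
    using assms(2,3) e(2) by (simp add: isCont_def eventually_nhds_conv_at topological_tendstoD)
  then obtain d where "d > 0" "\<And>t. \<bar>t\<bar> < d \<Longrightarrow> \<gamma> t \<in> U"
    by (auto simp: eventually_nhds_metric dist_real_def)
  with e \<gamma> show ?thesis
    by (intro that[of "min d e" \<gamma>]) auto
qed

lemma tangent_space_subset_kernel:
  fixes \<rho> :: "'a::real_normed_vector \<Rightarrow> real"
  assumes "open U" and "y \<in> U" and level: "M \<inter> U = {z\<in>U. \<rho> z = 0}"
    and \<rho>: "(\<rho> has_derivative L) (at y)" and v: "v \<in> tangent_space M y"
  shows "L v = 0"
proof -
  obtain \<gamma> e where e: "e > 0" "\<gamma> 0 = y" "\<And>t. \<bar>t\<bar> < e \<Longrightarrow> \<gamma> t \<in> M \<inter> U"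
    and \<gamma>: "(\<gamma> has_vector_derivative v) (at 0)"
    using tangent_space_curve_within[OF v assms(1,2)] by blast
  have chain: "((\<rho> \<circ> \<gamma>) has_derivative (\<lambda>t. L (t *\<^sub>R v))) (at 0)"
    using diff_chain_at[of \<gamma> "\<lambda>t. t *\<^sub>R v" 0 \<rho> L] \<gamma> \<rho> e(2)
    by (simp add: has_vector_derivative_def o_def)
  have vanish: "(\<rho> \<circ> \<gamma>) t = 0" if "dist t 0 < e" for t
    using e(3)[of t] that level by auto
  have "((\<lambda>_. 0::real) has_derivative (\<lambda>t. L (t *\<^sub>R v))) (at 0)"
    by (rule has_derivative_transform_within[OF chain e(1) UNIV_I]) (use vanish in auto)
  then have "(\<lambda>t. L (t *\<^sub>R v)) = (\<lambda>_. 0)"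
    using has_derivative_unique has_derivative_const by blast
  then show ?thesis
    by (metis scaleR_one)
qed

lemma has_derivative_zero_selection:
  fixes P :: "real \<Rightarrow> real \<Rightarrow> bool"
  assumes small: "\<And>\<epsilon>. \<epsilon> > 0 \<Longrightarrow> \<exists>\<delta>>0. \<forall>t. \<bar>t\<bar> < \<delta> \<longrightarrow> (\<exists>s. \<bar>s\<bar> \<le> \<epsilon> * \<bar>t\<bar> \<and> P t s)"
    and "P 0 0"
  obtains \<sigma> \<delta> where "\<delta> > 0" "\<sigma> 0 = 0" "\<And>t. \<bar>t\<bar> < \<delta> \<Longrightarrow> P t (\<sigma> t)"
    and "(\<sigma> has_derivative (\<lambda>_. 0)) (at 0)"
proof -
  define m where "m t = Inf {\<bar>s\<bar> | s. P t s}" for t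
  define \<sigma> where "\<sigma> t = (if t = 0 then 0 else SOME s. P t s \<and> \<bar>s\<bar> \<le> m t + t\<^sup>2)" for t
  obtain \<delta> where \<delta>: "\<delta> > 0" "\<And>t. \<bar>t\<bar> < \<delta> \<Longrightarrow> \<exists>s. \<bar>s\<bar> \<le> 1 * \<bar>t\<bar> \<and> P t s"
    using small[of 1] by auto
  have m_le: "m t \<le> \<bar>s\<bar>" if "P t s" for t s
    unfolding m_def by (rule cInf_lower) (auto intro: that bdd_belowI[of _ 0])
  have \<sigma>0: "\<sigma> 0 = 0"
    by (simp add: \<sigma>_def)
  have \<sigma>: "P t (\<sigma> t) \<and> \<bar>\<sigma> t\<bar> \<le> m t + t\<^sup>2" if t: "\<bar>t\<bar> < \<delta>" and "t \<noteq> 0" for t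
  proof -
    have ne: "{\<bar>s\<bar> | s. P t s} \<noteq> {}"
      using \<delta>(2)[OF t] by auto
    have "Inf {\<bar>s\<bar> | s. P t s} < m t + t\<^sup>2"
      using \<open>t \<noteq> 0\<close> by (simp add: m_def)
    then obtain s where "P t s" "\<bar>s\<bar> < m t + t\<^sup>2"
      using cInf_lessD[OF ne] by blast
    then have "\<exists>s. P t s \<and> \<bar>s\<bar> \<le> m t + t\<^sup>2"
      by auto
    then show ?thesis
      using \<open>t \<noteq> 0\<close> unfolding \<sigma>_def by (simp only: if_False) (rule someI_ex)
  qed
  have "(\<sigma> has_derivative (\<lambda>_. 0)) (at 0)"
    unfolding has_derivative_at'
  proof (intro conjI allI impI bounded_linear_zero)
    fix e :: real assume "e > 0"
    then obtain \<delta>' where \<delta>': "\<delta>' > 0" "\<And>t. \<bar>t\<bar> < \<delta>' \<Longrightarrow> \<exists>s. \<bar>s\<bar> \<le> e / 2 * \<bar>t\<bar> \<and> P t s"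
      using small[of "e / 2"] by auto
    have "\<bar>\<sigma> t\<bar> / \<bar>t\<bar> < e" if "0 < \<bar>t\<bar>" "\<bar>t\<bar> < min (min \<delta> \<delta>') (e / 2)" for t
    proof -
      have "\<bar>t\<bar> < \<delta>'"
        using that by simp
      then obtain s where "\<bar>s\<bar> \<le> e / 2 * \<bar>t\<bar>" "P t s"
        using \<delta>'(2) by blast
      moreover have "\<bar>\<sigma> t\<bar> \<le> m t + \<bar>t\<bar> * \<bar>t\<bar>"
        using \<sigma>[of t] that by (simp add: power2_eq_square)
      ultimately have "\<bar>\<sigma> t\<bar> \<le> e / 2 * \<bar>t\<bar> + \<bar>t\<bar> * \<bar>t\<bar>"
        using m_le[of t s] by linarith
      also have "\<dots> < e / 2 * \<bar>t\<bar> + e / 2 * \<bar>t\<bar>"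
        using mult_strict_right_mono[of "\<bar>t\<bar>" "e / 2" "\<bar>t\<bar>"] that by simp
      finally show ?thesis
        using that by (simp add: divide_less_eq)
    qed
    then show "\<exists>d>0. \<forall>t. 0 < norm (t - 0) \<and> norm (t - 0) < d \<longrightarrow>
        norm (\<sigma> t - \<sigma> 0 - 0) / norm (t - 0) < e"
      using \<delta> \<delta>' \<open>e > 0\<close> by (intro exI[of _ "min (min \<delta> \<delta>') (e / 2)"]) (simp add: \<sigma>0)
  qed
  moreover have "P t (\<sigma> t)" if "\<bar>t\<bar> < \<delta>" for t
    using \<sigma>[OF that] \<sigma>0 \<open>P 0 0\<close> by (cases "t = 0") auto
  ultimately show ?thesis
    using that \<delta>(1) \<sigma>0 by blast
qed

lemma has_derivative_cone_estimate:
  fixes \<rho> :: "'a::real_normed_vector \<Rightarrow> real"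
  assumes U: "open U" "y \<in> U" and "\<rho> y = 0"
    and \<rho>: "(\<rho> has_derivative L) (at y)" and "L v = 0" and "L u = 1" and "\<epsilon> > 0"
  obtains \<delta> where "\<delta> > 0" and "\<And>t s. \<bar>t\<bar> < \<delta> \<Longrightarrow> \<bar>s\<bar> \<le> \<epsilon> * \<bar>t\<bar> \<Longrightarrow>
    y + t *\<^sub>R v + s *\<^sub>R u \<in> U \<and> \<bar>\<rho> (y + t *\<^sub>R v + s *\<^sub>R u) - s\<bar> \<le> \<epsilon> * \<bar>t\<bar> / 2"
proof -
  define K where "K = norm v + \<epsilon> * norm u + 1"
  have K: "K > 0"
    using \<open>\<epsilon> > 0\<close> by (simp add: K_def add_nonneg_pos)
  have L: "linear L"
    using \<rho> has_derivative_linear by blast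
  have "\<epsilon> / (2 * K) > 0"
    using K \<open>\<epsilon> > 0\<close> by simp
  then obtain d1 where d1: "d1 > 0" "\<And>z. norm (z - y) < d1 \<Longrightarrow>
      norm (\<rho> z - \<rho> y - L (z - y)) \<le> \<epsilon> / (2 * K) * norm (z - y)"
    using \<rho> unfolding has_derivative_at_alt by blast
  obtain d2 where d2: "d2 > 0" "ball y d2 \<subseteq> U"
    using U openE by blast
  have "y + t *\<^sub>R v + s *\<^sub>R u \<in> U \<and> \<bar>\<rho> (y + t *\<^sub>R v + s *\<^sub>R u) - s\<bar> \<le> \<epsilon> * \<bar>t\<bar> / 2"
    if t: "\<bar>t\<bar> < min d1 d2 / K" and s: "\<bar>s\<bar> \<le> \<epsilon> * \<bar>t\<bar>" for t s
  proof -
    define h where "h = t *\<^sub>R v + s *\<^sub>R u"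
    have "norm h \<le> \<bar>t\<bar> * norm v + \<bar>s\<bar> * norm u"
      unfolding h_def by (rule order_trans[OF norm_triangle_ineq]) simp
    also have "\<dots> \<le> \<bar>t\<bar> * K"
      using mult_right_mono[OF s, of "norm u"] by (simp add: K_def algebra_simps)
    finally have h: "norm h \<le> \<bar>t\<bar> * K" .
    also have "\<bar>t\<bar> * K < min d1 d2"
      using t K by (simp add: pos_less_divide_eq)
    finally have "y + h \<in> U" "norm h < d1"
      using d2 by (auto simp: dist_norm)
    moreover have "L h = s"
      using L \<open>L v = 0\<close> \<open>L u = 1\<close> by (simp add: h_def linear_add linear_scale)
    ultimately have "\<bar>\<rho> (y + h) - s\<bar> \<le> \<epsilon> / (2 * K) * norm h"
      using d1(2)[of "y + h"] \<open>\<rho> y = 0\<close> by simp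
    also have "\<dots> \<le> \<epsilon> / (2 * K) * (\<bar>t\<bar> * K)"
      using h \<open>\<epsilon> > 0\<close> K by (intro mult_left_mono) auto
    also have "\<dots> = \<epsilon> * \<bar>t\<bar> / 2"
      using K by simp
    finally show ?thesis
      using \<open>y + h \<in> U\<close> by (simp add: h_def add.assoc)
  qed
  moreover have "min d1 d2 / K > 0"
    using d1 d2 K by simp
  ultimately show ?thesis
    using that by blast
qed

lemma level_set_meets_transversal_segment:
  fixes \<rho> :: "'a::real_normed_vector \<Rightarrow> real"
  assumes U: "open U" "y \<in> U" and "\<rho> y = 0" and cont: "continuous_on U \<rho>"
    and \<rho>: "(\<rho> has_derivative L) (at y)" and "L v = 0" and "L u = 1" and "\<epsilon> > 0"
  shows "\<exists>\<delta>>0. \<forall>t. \<bar>t\<bar> < \<delta> \<longrightarrow> (\<exists>s. \<bar>s\<bar> \<le> \<epsilon> * \<bar>t\<bar> \<and>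
           y + t *\<^sub>R v + s *\<^sub>R u \<in> U \<and> \<rho> (y + t *\<^sub>R v + s *\<^sub>R u) = 0)"
proof -
  obtain \<delta> where "\<delta> > 0" and close: "\<And>t s. \<bar>t\<bar> < \<delta> \<Longrightarrow> \<bar>s\<bar> \<le> \<epsilon> * \<bar>t\<bar> \<Longrightarrow>
      y + t *\<^sub>R v + s *\<^sub>R u \<in> U \<and> \<bar>\<rho> (y + t *\<^sub>R v + s *\<^sub>R u) - s\<bar> \<le> \<epsilon> * \<bar>t\<bar> / 2"
    using has_derivative_cone_estimate[OF U \<open>\<rho> y = 0\<close> \<rho> \<open>L v = 0\<close> \<open>L u = 1\<close> \<open>\<epsilon> > 0\<close>] by blast
  have "\<exists>s. \<bar>s\<bar> \<le> \<epsilon> * \<bar>t\<bar> \<and> y + t *\<^sub>R v + s *\<^sub>R u \<in> U \<and> \<rho> (y + t *\<^sub>R v + s *\<^sub>R u) = 0"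
    if t: "\<bar>t\<bar> < \<delta>" for t
  proof -
    define a where "a = \<epsilon> * \<bar>t\<bar>"
    have "a \<ge> 0"
      using \<open>\<epsilon> > 0\<close> by (simp add: a_def)
    have "(\<lambda>s. y + t *\<^sub>R v + s *\<^sub>R u) ` {-a..a} \<subseteq> U"
      using close[OF t] by (auto simp: a_def)
    then have "continuous_on {-a..a} (\<lambda>s. \<rho> (y + t *\<^sub>R v + s *\<^sub>R u))"
      by (intro continuous_on_compose2[OF cont] continuous_intros)
    moreover have "\<bar>\<rho> (y + t *\<^sub>R v + (- a) *\<^sub>R u) - (- a)\<bar> \<le> a / 2"
      using close[OF t, of "- a"] \<open>a \<ge> 0\<close> by (simp add: a_def)
    then have "\<rho> (y + t *\<^sub>R v + (- a) *\<^sub>R u) \<le> 0"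
      using \<open>a \<ge> 0\<close> by linarith
    moreover have "\<bar>\<rho> (y + t *\<^sub>R v + a *\<^sub>R u) - a\<bar> \<le> a / 2"
      using close[OF t, of a] \<open>a \<ge> 0\<close> by (simp add: a_def)
    then have "0 \<le> \<rho> (y + t *\<^sub>R v + a *\<^sub>R u)"
      using \<open>a \<ge> 0\<close> by linarith
    ultimately obtain s where "- a \<le> s" "s \<le> a" "\<rho> (y + t *\<^sub>R v + s *\<^sub>R u) = 0"
      using IVT'[of "\<lambda>s. \<rho> (y + t *\<^sub>R v + s *\<^sub>R u)" "- a" 0 a] \<open>a \<ge> 0\<close> by auto
    then have s: "\<bar>s\<bar> \<le> \<epsilon> * \<bar>t\<bar>"
      by (simp add: a_def abs_le_iff)
    then show ?thesis
      using close[OF t s] \<open>\<rho> (y + t *\<^sub>R v + s *\<^sub>R u) = 0\<close> by blast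
  qed
  with \<open>\<delta> > 0\<close> show ?thesis
    by blast
qed

lemma kernel_subset_tangent_space:
  fixes \<rho> :: "'a::real_normed_vector \<Rightarrow> real"
  assumes U: "open U" "y \<in> U" and "y \<in> M" and level: "M \<inter> U = {z\<in>U. \<rho> z = 0}"
    and cont: "continuous_on U \<rho>" and \<rho>: "(\<rho> has_derivative L) (at y)"
    and "L \<noteq> (\<lambda>_. 0)" and "L v = 0"
  shows "v \<in> tangent_space M y"
proof -
  have L: "linear L"
    using \<rho> has_derivative_linear by blast
  obtain w where "L w \<noteq> 0"
    using \<open>L \<noteq> (\<lambda>_. 0)\<close> by auto
  define u where "u = (1 / L w) *\<^sub>R w"
  have "L u = 1"
    using L \<open>L w \<noteq> 0\<close> by (simp add: u_def linear_scale)
  have "\<rho> y = 0"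
    using U \<open>y \<in> M\<close> level by auto
  define P where "P t s \<longleftrightarrow> y + t *\<^sub>R v + s *\<^sub>R u \<in> U \<and> \<rho> (y + t *\<^sub>R v + s *\<^sub>R u) = 0" for t s
  have small: "\<exists>\<delta>>0. \<forall>t. \<bar>t\<bar> < \<delta> \<longrightarrow> (\<exists>s. \<bar>s\<bar> \<le> \<epsilon> * \<bar>t\<bar> \<and> P t s)" if "\<epsilon> > 0" for \<epsilon>
    using level_set_meets_transversal_segment[OF U \<open>\<rho> y = 0\<close> cont \<rho> \<open>L v = 0\<close> \<open>L u = 1\<close> that]
    by (simp add: P_def)
  have "P 0 0"
    using U \<open>\<rho> y = 0\<close> by (simp add: P_def)
  then obtain \<sigma> \<delta> where \<sigma>: "\<delta> > 0" "\<sigma> 0 = 0" "\<And>t. \<bar>t\<bar> < \<delta> \<Longrightarrow> P t (\<sigma> t)"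
    and \<sigma>': "(\<sigma> has_derivative (\<lambda>_. 0)) (at 0)"
    using has_derivative_zero_selection[OF small] by blast
  define \<gamma> where "\<gamma> t = y + t *\<^sub>R v + \<sigma> t *\<^sub>R u" for t
  have "(\<gamma> has_derivative (\<lambda>t. t *\<^sub>R v)) (at 0)"
    unfolding \<gamma>_def by (auto intro!: derivative_eq_intros \<sigma>')
  moreover have "\<gamma> t \<in> M" if "\<bar>t\<bar> < \<delta>" for t
    using \<sigma>(3)[OF that] level by (auto simp: P_def \<gamma>_def)
  ultimately show ?thesis
    unfolding tangent_space_def using \<sigma>(1,2)
    by (intro CollectI exI[of _ \<gamma>] exI[of _ \<delta>]) (simp add: \<gamma>_def has_vector_derivative_def)
qed

lemma tangent_space_regular_level_set:
  fixes \<rho> :: "'a::real_normed_vector \<Rightarrow> real"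
  assumes "open U" "y \<in> U" "y \<in> M" "M \<inter> U = {z\<in>U. \<rho> z = 0}" "continuous_on U \<rho>"
    and "(\<rho> has_derivative L) (at y)" "L \<noteq> (\<lambda>_. 0)"
  shows "tangent_space M y = {v. L v = 0}"
  using tangent_space_subset_kernel[OF assms(1,2,4,6)] kernel_subset_tangent_space[OF assms] by blast

section \<open>Real linear forms on complex space\<close>

definition cpair :: "complex ^ 'n \<Rightarrow> complex ^ 'n \<Rightarrow> complex" where
  "cpair a v = (\<Sum>j\<in>UNIV. a $ j * v $ j)"

lemma cpair_diff_right: "cpair a (v - w) = cpair a v - cpair a w"
  by (simp add: cpair_def sum_subtractf algebra_simps)

lemma cpair_scale_left: "cpair (c *s a) v = c * cpair a v"
  by (simp add: cpair_def sum_distrib_left mult.assoc)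

lemma cpair_Jmul: "cpair a (Jmul v) = \<i> * cpair a v"
  by (simp add: cpair_def Jmul_def sum_distrib_left algebra_simps)

text \<open>For \<open>L = d\<rho>\<close> these are the coefficients \<open>2 \<partial>\<rho>/\<partial>z\<^sub>j\<close>.\<close>

definition complex_coeffs :: "(complex ^ 'n \<Rightarrow> real) \<Rightarrow> complex ^ 'n" where
  "complex_coeffs L = (\<chi> j. complex_of_real (L (axis j 1)) - \<i> * complex_of_real (L (axis j \<i>)))"

lemma linear_eq_Re_cpair:
  fixes L :: "complex ^ 'n \<Rightarrow> real"
  assumes "linear L"
  shows "L v = Re (cpair (complex_coeffs L) v)"
proof -
  have "v = (\<Sum>j\<in>UNIV. Re (v $ j) *\<^sub>R axis j 1 + Im (v $ j) *\<^sub>R axis j \<i>)"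
    by (simp add: vec_eq_iff axis_def sum_component if_distrib complex_eq_iff cong: if_cong)
  then have "L v = L (\<Sum>j\<in>UNIV. Re (v $ j) *\<^sub>R axis j 1 + Im (v $ j) *\<^sub>R axis j \<i>)"
    by simp
  also have "\<dots> = (\<Sum>j\<in>UNIV. Re (v $ j) * L (axis j 1) + Im (v $ j) * L (axis j \<i>))"
    by (simp add: linear_sum[OF assms] linear_add[OF assms] linear_scale[OF assms])
  finally show ?thesis
    by (simp add: cpair_def complex_coeffs_def ac_simps)
qed

lemma complex_coeffs_nonzero:
  fixes L :: "complex ^ 'n \<Rightarrow> real"
  assumes "linear L" and "L \<noteq> (\<lambda>_. 0)"
  obtains k where "complex_coeffs L $ k \<noteq> 0"
proof -
  obtain v where "L v \<noteq> 0"
    using assms(2) by auto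
  then have "cpair (complex_coeffs L) v \<noteq> 0"
    using linear_eq_Re_cpair[OF assms(1)] by auto
  then obtain k where "complex_coeffs L $ k * v $ k \<noteq> 0"
    unfolding cpair_def using sum.not_neutral_contains_not_neutral by blast
  then show ?thesis
    using that by auto
qed

lemma complex_tangent_eq_kernel:
  fixes L :: "complex ^ 'n \<Rightarrow> real"
  assumes T: "tangent_space M y = {v. L v = 0}" and L: "linear L"
  shows "complex_tangent M y = {v. cpair (complex_coeffs L) v = 0}"
proof (intro set_eqI)
  fix v :: "complex ^ 'n"
  have Jmul_Jmul: "Jmul (Jmul w) = - w" for w :: "complex ^ 'n"
    by (simp add: Jmul_def vec_eq_iff)
  have "v \<in> Jmul ` tangent_space M y \<longleftrightarrow> L (Jmul v) = 0"
  proof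
    assume "v \<in> Jmul ` tangent_space M y"
    then obtain w where "L w = 0" "v = Jmul w"
      using T by blast
    then show "L (Jmul v) = 0"
      using L by (simp add: Jmul_Jmul linear_neg)
  next
    assume "L (Jmul v) = 0"
    then have "- Jmul v \<in> tangent_space M y"
      using T L by (simp add: linear_neg)
    moreover have "v = Jmul (- Jmul v)"
      by (simp add: Jmul_def vec_eq_iff)
    ultimately show "v \<in> Jmul ` tangent_space M y"
      by blast
  qed
  then have "v \<in> complex_tangent M y \<longleftrightarrow> L v = 0 \<and> L (Jmul v) = 0"
    using T by (simp add: complex_tangent_def)
  also have "\<dots> \<longleftrightarrow> cpair (complex_coeffs L) v = 0"
    using linear_eq_Re_cpair[OF L, of v] linear_eq_Re_cpair[OF L, of "Jmul v"]
    by (simp add: cpair_Jmul complex_eq_iff)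
  finally show "v \<in> complex_tangent M y \<longleftrightarrow> v \<in> {v. cpair (complex_coeffs L) v = 0}"
    by simp
qed

lemma bounded_linear_axis: "bounded_linear (\<lambda>z::'a::real_normed_vector. axis j z :: 'a ^ 'n)"
proof (rule bounded_linear_intro[where K=1])
  fix z :: 'a
  have "(\<Sum>i\<in>UNIV. (norm ((axis j z :: 'a ^ 'n) $ i))\<^sup>2) = (\<Sum>i\<in>UNIV. if i = j then (norm z)\<^sup>2 else 0)"
    by (rule sum.cong) (auto simp: axis_def)
  then show "norm (axis j z :: 'a ^ 'n) \<le> norm z * 1"
    by (simp add: norm_vec_def L2_set_def)
qed (auto simp: vec_eq_iff axis_def)

lemma has_derivative_vec_lambda:
  fixes f :: "'n::finite \<Rightarrow> 'a::real_normed_vector \<Rightarrow> 'b::real_normed_vector"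
  assumes "\<And>j. (f j has_derivative f' j) F"
  shows "((\<lambda>x. \<chi> j. f j x) has_derivative (\<lambda>h. \<chi> j. f' j h)) F"
proof -
  have "(\<lambda>x. \<chi> j. f j x) = (\<lambda>x. \<Sum>j\<in>UNIV. axis j (f j x))"
    and "(\<lambda>h. \<chi> j. f' j h) = (\<lambda>h. \<Sum>j\<in>UNIV. axis j (f' j h))"
    by (simp_all add: fun_eq_iff vec_eq_iff axis_def sum_component if_distrib cong: if_cong)
  then show ?thesis
    by (simp only:) (intro has_derivative_sum bounded_linear.has_derivative[OF bounded_linear_axis] assms)
qed

lemma has_derivative_complex_coeffs:
  fixes f :: "'a::real_normed_vector \<Rightarrow> ((complex ^ 'n) \<Rightarrow>\<^sub>L real)"
  assumes "(f has_derivative f') F"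
  shows "((\<lambda>z. complex_coeffs (f z)) has_derivative (\<lambda>h. complex_coeffs (f' h))) F"
proof -
  have "((\<lambda>z. f z b) has_derivative (\<lambda>h. f' h b)) F" for b
    using bounded_linear.has_derivative[OF blinfun.bounded_linear_left assms] .
  then show ?thesis
    unfolding complex_coeffs_def
    by (intro has_derivative_vec_lambda has_derivative_diff has_derivative_mult_right
        bounded_linear.has_derivative[OF bounded_linear_of_real])
qed

section \<open>Affine charts of the dual projective space\<close>

lemma is_chart_coord_unique:
  fixes k :: "'n::finite" and c c' :: "complex ^ 'n"
  assumes c: "is_chart_coord k H c" and c': "is_chart_coord k H c'"
  shows "c = c'"
proof -
  have H: "z $ k + (\<Sum>j\<in>UNIV - {k}. c $ j * z $ j) + c $ k = 0 \<longleftrightarrow>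
           z $ k + (\<Sum>j\<in>UNIV - {k}. c' $ j * z $ j) + c' $ k = 0" for z
    using c c' unfolding is_chart_coord_def by blast
  define z0 :: "complex ^ 'n" where "z0 = axis k (- c $ k)"
  have "(\<Sum>j\<in>UNIV - {k}. d $ j * z0 $ j) = 0" for d :: "complex ^ 'n"
    by (rule sum.neutral) (auto simp: z0_def axis_def)
  then have ck: "c' $ k = c $ k"
    using H[of z0] by (simp add: z0_def)
  have "c $ j = c' $ j" if "j \<noteq> k" for j
  proof -
    define z1 :: "complex ^ 'n" where "z1 = axis k (- c $ k - c $ j) + axis j 1"
    have "(\<Sum>i\<in>UNIV - {k}. d $ i * z1 $ i) = d $ j" for d :: "complex ^ 'n"
    proof -
      have "(\<Sum>i\<in>UNIV - {k}. d $ i * z1 $ i) = (\<Sum>i\<in>UNIV - {k}. if i = j then d $ j else 0)"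
        by (rule sum.cong) (auto simp: z1_def axis_def)
      also have "\<dots> = d $ j"
        using that by simp
      finally show ?thesis .
    qed
    moreover have z1k: "z1 $ k = - c $ k - c $ j"
      using that by (simp add: z1_def axis_def)
    ultimately have "z1 $ k + c' $ j + c' $ k = 0"
      using H[of z1] by simp
    then show ?thesis
      using z1k ck by (simp add: algebra_simps)
  qed
  then show ?thesis
    using ck by (metis vec_eq_iff)
qed

lemma dual_chart_eqI: "is_chart_coord k H c \<Longrightarrow> dual_chart k H = c"
  unfolding dual_chart_def using is_chart_coord_unique by blast

definition hyperplane_coords :: "'n \<Rightarrow> complex ^ 'n \<Rightarrow> complex ^ 'n \<Rightarrow> complex ^ 'n" where
  "hyperplane_coords k a y = (\<chi> j. if j = k then - cpair a y / a $ k else a $ j / a $ k)"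

lemma is_chart_coord_hyperplane_coords:
  assumes "a $ k \<noteq> 0"
  shows "is_chart_coord k ((\<lambda>v. y + v) ` {v. cpair a v = 0}) (hyperplane_coords k a y)"
proof -
  let ?c = "hyperplane_coords k a y"
  have split: "cpair a z = a $ k * z $ k + (\<Sum>j\<in>UNIV - {k}. a $ j * z $ j)" for z
    unfolding cpair_def by (subst sum.remove[of _ k]) auto
  have ck: "a $ k * ?c $ k = - cpair a y"
    using assms by (simp add: hyperplane_coords_def)
  have cj: "a $ k * (\<Sum>j\<in>UNIV - {k}. ?c $ j * z $ j) = (\<Sum>j\<in>UNIV - {k}. a $ j * z $ j)" for z
    using assms by (simp add: hyperplane_coords_def sum_distrib_left)
  have "cpair a (z - y) = a $ k * (z $ k + (\<Sum>j\<in>UNIV - {k}. ?c $ j * z $ j) + ?c $ k)" for z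
    by (simp only: cpair_diff_right distrib_left ck cj split[of z]) simp
  then have "cpair a (z - y) = 0 \<longleftrightarrow> z $ k + (\<Sum>j\<in>UNIV - {k}. ?c $ j * z $ j) + ?c $ k = 0" for z
    using assms by simp
  moreover have "(\<lambda>v. y + v) ` {v. cpair a v = 0} = {z. cpair a (z - y) = 0}"
    by (auto simp: image_iff intro!: exI[of _ "z - y" for z])
  ultimately show ?thesis
    unfolding is_chart_coord_def by auto
qed

text \<open>The quotient-rule derivative of \<open>(a, y) \<mapsto> hyperplane_coords k a y\<close> in direction \<open>(\<alpha>, \<eta>)\<close>.\<close>

definition hyperplane_coords_deriv ::
    "'n \<Rightarrow> complex ^ 'n \<Rightarrow> complex ^ 'n \<Rightarrow> complex ^ 'n \<Rightarrow> complex ^ 'n \<Rightarrow> complex ^ 'n" where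
  "hyperplane_coords_deriv k a y \<alpha> \<eta> = (\<chi> j.
     if j = k then (- (cpair \<alpha> y + cpair a \<eta>) * a $ k - (- cpair a y) * \<alpha> $ k) / (a $ k * a $ k)
     else (\<alpha> $ j * a $ k - a $ j * \<alpha> $ k) / (a $ k * a $ k))"

lemma has_derivative_cpair:
  assumes A: "(A has_derivative A') (at x within S)" and Y: "(Y has_derivative Y') (at x within S)"
  shows "((\<lambda>z. cpair (A z) (Y z)) has_derivative (\<lambda>h. cpair (A' h) (Y x) + cpair (A x) (Y' h)))
           (at x within S)"
proof -
  have "((\<lambda>z. A z $ j) has_derivative (\<lambda>h. A' h $ j)) (at x within S)"
    and "((\<lambda>z. Y z $ j) has_derivative (\<lambda>h. Y' h $ j)) (at x within S)" for j
    using bounded_linear.has_derivative[OF bounded_linear_vec_nth A]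
      bounded_linear.has_derivative[OF bounded_linear_vec_nth Y] by auto
  then show ?thesis
    unfolding cpair_def
    by (intro has_derivative_eq_rhs[OF has_derivative_sum[OF has_derivative_mult]])
      (auto simp: sum.distrib algebra_simps)
qed

lemma has_derivative_hyperplane_coords:
  assumes A: "(A has_derivative A') (at y within S)" and "A y $ k \<noteq> 0"
  shows "((\<lambda>z. hyperplane_coords k (A z) z) has_derivative
           (\<lambda>h. hyperplane_coords_deriv k (A y) y (A' h) h)) (at y within S)"
proof -
  have Aj: "((\<lambda>z. A z $ j) has_derivative (\<lambda>h. A' h $ j)) (at y within S)" for j
    using bounded_linear.has_derivative[OF bounded_linear_vec_nth A] .
  have dk: "((\<lambda>z. - cpair (A z) z / A z $ k) has_derivative
      (\<lambda>h. (- (cpair (A' h) y + cpair (A y) h) * A y $ k - (- cpair (A y) y) * A' h $ k) / (A y $ k * A y $ k)))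
      (at y within S)"
    by (intro has_derivative_divide' has_derivative_minus has_derivative_cpair A has_derivative_ident Aj assms(2))
  have dj: "((\<lambda>z. A z $ j / A z $ k) has_derivative
      (\<lambda>h. (A' h $ j * A y $ k - A y $ j * A' h $ k) / (A y $ k * A y $ k))) (at y within S)" for j
    by (intro has_derivative_divide' Aj assms(2))
  show ?thesis
    unfolding hyperplane_coords_def hyperplane_coords_deriv_def
  proof (rule has_derivative_vec_lambda)
    fix j
    show "((\<lambda>z. if j = k then - cpair (A z) z / A z $ k else A z $ j / A z $ k) has_derivative
        (\<lambda>h. if j = k then (- (cpair (A' h) y + cpair (A y) h) * A y $ k - (- cpair (A y) y) * A' h $ k) / (A y $ k * A y $ k)
             else (A' h $ j * A y $ k - A y $ j * A' h $ k) / (A y $ k * A y $ k))) (at y within S)"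
      using dk dj[of j] by (cases "j = k") (simp_all only: if_True if_False simp_thms)
  qed
qed

lemma hyperplane_coords_deriv_eq_0D:
  assumes ak: "a $ k \<noteq> 0" and "hyperplane_coords_deriv k a y \<alpha> \<eta> = 0"
  shows "\<alpha> = (\<alpha> $ k / a $ k) *s a" and "cpair a \<eta> = 0"
proof -
  have comp: "hyperplane_coords_deriv k a y \<alpha> \<eta> $ j = 0" for j
    using assms(2) by simp
  define c where "c = \<alpha> $ k / a $ k"
  have "\<alpha> $ j = c * a $ j" for j
  proof (cases "j = k")
    case False
    then have "(\<alpha> $ j * a $ k - a $ j * \<alpha> $ k) / (a $ k * a $ k) = 0"
      using comp[of j] by (simp add: hyperplane_coords_deriv_def)
    then have "\<alpha> $ j * a $ k = a $ j * \<alpha> $ k"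
      using ak by simp
    then show ?thesis
      using ak by (simp add: c_def divide_simps mult.commute)
  qed (use ak in \<open>simp add: c_def\<close>)
  then show \<alpha>: "\<alpha> = (\<alpha> $ k / a $ k) *s a"
    using ak by (simp add: vec_eq_iff)
  have "(- (cpair \<alpha> y + cpair a \<eta>) * a $ k - (- cpair a y) * \<alpha> $ k) / (a $ k * a $ k) = 0"
    using comp[of k] by (simp add: hyperplane_coords_deriv_def)
  then have "cpair \<alpha> y * a $ k + cpair a \<eta> * a $ k = cpair a y * \<alpha> $ k"
    using ak by (simp add: algebra_simps)
  moreover have "cpair \<alpha> y * a $ k = cpair a y * \<alpha> $ k"
    using ak by (subst \<alpha>) (simp add: cpair_scale_left)
  ultimately show "cpair a \<eta> = 0"
    using ak by simp
qed

lemma tendsto_cpair [tendsto_intros]: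
  "(A \<longlongrightarrow> a) F \<Longrightarrow> (Y \<longlongrightarrow> y) F \<Longrightarrow> ((\<lambda>z. cpair (A z) (Y z)) \<longlongrightarrow> cpair a y) F"
  unfolding cpair_def by (intro tendsto_intros)

lemma tendsto_hyperplane_coords_deriv [tendsto_intros]:
  assumes "(A \<longlongrightarrow> a) F" "(Y \<longlongrightarrow> y) F" "(B \<longlongrightarrow> \<alpha>) F" "(H \<longlongrightarrow> \<eta>) F" and "a $ k \<noteq> 0"
  shows "((\<lambda>z. hyperplane_coords_deriv k (A z) (Y z) (B z) (H z)) \<longlongrightarrow> hyperplane_coords_deriv k a y \<alpha> \<eta>) F"
  unfolding hyperplane_coords_deriv_def
  apply (rule tendsto_vec_lambda)
  subgoal for j
    by (cases "j = k"; simp only: if_True if_False simp_thms; intro tendsto_intros assms(1-4); simp add: assms(5))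
  done

section \<open>The second fundamental form\<close>

lemma kernel_orthogonal_inner_mult_commute:
  fixes L :: "'a::real_inner \<Rightarrow> real"
  assumes "linear L" and "\<And>w. L w = 0 \<Longrightarrow> n \<bullet> w = 0"
  shows "(n \<bullet> v) * L u = (n \<bullet> u) * L v"
proof -
  have "L (L u *\<^sub>R v - L v *\<^sub>R u) = 0"
    using assms(1) by (simp add: linear_diff linear_scale)
  then have "n \<bullet> (L u *\<^sub>R v - L v *\<^sub>R u) = 0"
    using assms(2) by blast
  then show ?thesis
    by (simp add: inner_diff_right algebra_simps)
qed

text \<open>Differentiate \<open>(n \<bullet> v) \<rho>' u = (n \<bullet> u) \<rho>' v\<close> along a curve in \<open>M\<close> with velocity \<open>v\<close>:
  at the base point only the term \<open>(Dn v \<bullet> v) \<rho>' u\<close> survives.\<close>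

lemma second_fundamental_form_vanishes:
  fixes n :: "'a::euclidean_space \<Rightarrow> 'a" and \<rho>' :: "'a \<Rightarrow> ('a \<Rightarrow>\<^sub>L real)"
  assumes W: "open W" "y \<in> W"
    and perp: "\<And>z w. z \<in> M \<inter> W \<Longrightarrow> \<rho>' z w = 0 \<Longrightarrow> n z \<bullet> w = 0"
    and n: "(n has_derivative Dn) (at y within M \<inter> W)"
    and \<rho>'': "(\<rho>' has_derivative D) (at y)"
    and v: "v \<in> tangent_space M y" "\<rho>' y v = 0" and "\<rho>' y \<noteq> 0"
    and "D v v = 0"
  shows "Dn v \<bullet> v = 0"
proof -
  obtain u where u: "\<rho>' y u \<noteq> 0"
    using \<open>\<rho>' y \<noteq> 0\<close> by (metis blinfun_eqI zero_blinfun.rep_eq)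
  obtain \<gamma> e where e: "e > 0" "\<gamma> 0 = y" "\<And>t. \<bar>t\<bar> < e \<Longrightarrow> \<gamma> t \<in> M \<inter> W"
    and \<gamma>: "(\<gamma> has_vector_derivative v) (at 0)"
    using tangent_space_curve_within[OF v(1) W] by blast
  define B where "B = ball (0::real) e"
  have B: "open B" "0 \<in> B" "\<gamma> ` B \<subseteq> M \<inter> W"
    using e by (auto simp: B_def)
  have \<gamma>': "(\<gamma> has_derivative (\<lambda>t. t *\<^sub>R v)) (at 0)"
    using \<gamma> by (simp add: has_vector_derivative_def)
  have "(n has_derivative Dn) (at (\<gamma> 0) within \<gamma> ` B)"
    using has_derivative_subset[OF n B(3)] e(2) by simp
  then have "((\<lambda>t. n (\<gamma> t)) has_derivative (\<lambda>t. Dn (t *\<^sub>R v))) (at 0)"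
    using diff_chain_within[OF has_derivative_at_withinI[OF \<gamma>', of B]] at_within_open[OF B(2,1)]
    by (simp add: o_def)
  then have nw: "((\<lambda>t. n (\<gamma> t) \<bullet> w) has_derivative (\<lambda>t. Dn (t *\<^sub>R v) \<bullet> w)) (at 0)" for w
    by (rule bounded_linear.has_derivative[OF bounded_linear_inner_left])
  have "((\<lambda>t. \<rho>' (\<gamma> t) w) has_derivative (\<lambda>t. D (t *\<^sub>R v) w)) (at 0)" for w
    using diff_chain_at[OF \<gamma>' bounded_linear.has_derivative[OF blinfun.bounded_linear_left \<rho>''[folded e(2)]]]
    by (simp add: o_def)
  note product = has_derivative_mult[OF nw this]
  have "linear (\<rho>' z)" for z
    by (simp add: blinfun.bounded_linear_right bounded_linear.linear)
  then have "(n (\<gamma> t) \<bullet> v) * \<rho>' (\<gamma> t) u = (n (\<gamma> t) \<bullet> u) * \<rho>' (\<gamma> t) v" if "t \<in> B" for t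
    using B(3) that by (intro kernel_orthogonal_inner_mult_commute perp) auto
  then have "((\<lambda>t. (n (\<gamma> t) \<bullet> u) * \<rho>' (\<gamma> t) v) has_derivative
      (\<lambda>t. (n y \<bullet> v) * D (t *\<^sub>R v) u + (Dn (t *\<^sub>R v) \<bullet> v) * \<rho>' y u)) (at 0)"
    using has_derivative_transform_within_open[OF product[of v u] B(1,2)] e(2) by simp
  from has_derivative_unique[OF this] product[of u v] e(2)
  have "(\<lambda>t. (n y \<bullet> v) * D (t *\<^sub>R v) u + (Dn (t *\<^sub>R v) \<bullet> v) * \<rho>' y u) =
        (\<lambda>t. (n y \<bullet> u) * D (t *\<^sub>R v) v + (Dn (t *\<^sub>R v) \<bullet> u) * \<rho>' y v)"
    by simp
  from fun_cong[OF this, of 1]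
  have "(n y \<bullet> v) * D v u + (Dn v \<bullet> v) * \<rho>' y u = (n y \<bullet> u) * D v v + (Dn v \<bullet> u) * \<rho>' y v"
    by simp
  moreover have "n y \<bullet> v = 0"
    using perp[of y v] B e v(2) by auto
  ultimately show ?thesis
    using u v(2) \<open>D v v = 0\<close> by simp
qed

section \<open>Level sets under maps with injective differential\<close>

lemma continuous_on_inv_into_compact_subset:
  fixes f :: "'a::t2_space \<Rightarrow> 'b::t2_space"
  assumes "continuous_on K f" "compact K" "inj_on f K" "A \<subseteq> K"
  shows "continuous_on (f ` A) (inv_into A f)"
proof -
  have "continuous_on (f ` K) (inv_into K f)"
    using assms(1-3) by (intro continuous_on_inv) auto
  then have "continuous_on (f ` A) (inv_into K f)"
    by (rule continuous_on_subset) (use assms(4) in auto)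
  moreover have "inv_into K f w = inv_into A f w" if "w \<in> f ` A" for w
    using that assms(3,4) inj_on_subset[OF assms(3,4)] by (auto simp: inv_into_f_f subsetD)
  ultimately show ?thesis
    using continuous_on_cong by blast
qed

lemma onorm_diff_small_near:
  fixes F' :: "'a::metric_space \<Rightarrow> 'b::euclidean_space \<Rightarrow> 'c::real_normed_vector"
  assumes S: "open S" "x \<in> S" and bl: "\<And>z. z \<in> S \<Longrightarrow> bounded_linear (F' z)"
    and cont: "\<And>b. isCont (\<lambda>z. F' z b) x" and "e > 0"
  shows "\<exists>d>0. \<forall>z. dist x z < d \<longrightarrow> onorm (\<lambda>v. F' z v - F' x v) < e"
proof -
  define \<phi> where "\<phi> z = (\<Sum>b\<in>Basis. norm (F' z b - F' x b))" for z
  have "isCont \<phi> x"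
    unfolding \<phi>_def by (intro continuous_intros cont)
  then obtain d where d: "d > 0" "\<And>z. dist z x < d \<Longrightarrow> \<bar>\<phi> z - \<phi> x\<bar> < e"
    using \<open>e > 0\<close> unfolding continuous_at_eps_delta dist_real_def by blast
  obtain r where r: "r > 0" "ball x r \<subseteq> S"
    using S openE by blast
  have "onorm (\<lambda>v. F' z v - F' x v) < e" if "dist x z < min d r" for z
  proof -
    have "z \<in> S"
      using that r by (auto simp: dist_commute)
    then have "onorm (\<lambda>v. F' z v - F' x v) \<le> \<phi> z"
      unfolding \<phi>_def using bl S(2) by (intro onorm_componentwise bounded_linear_sub)
    also have "\<phi> z < e"
      using d(2)[of z] that by (simp add: \<phi>_def dist_commute)
    finally show ?thesis .
  qed
  then show ?thesis
    using d r by (intro exI[of _ "min d r"]) auto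
qed

lemma inj_on_level_set_near:
  fixes G :: "'a::euclidean_space \<Rightarrow> 'b::euclidean_space" and \<rho> :: "'a \<Rightarrow> real"
  assumes S: "open S" "x \<in> S"
    and G: "\<And>z. z \<in> S \<Longrightarrow> (G has_derivative G' z) (at z)"
    and \<rho>: "\<And>z. z \<in> S \<Longrightarrow> (\<rho> has_derivative \<rho>' z) (at z)"
    and cont: "\<And>h. isCont (\<lambda>z. G' z h) x" "\<And>h. isCont (\<lambda>z. \<rho>' z h) x"
    and inj: "\<And>h. G' x h = 0 \<Longrightarrow> \<rho>' x h = 0 \<Longrightarrow> h = 0"
  obtains r where "r > 0" "ball x r \<subseteq> S" "inj_on G {z \<in> ball x r. \<rho> z = 0}"
proof -
  define F where "F z = (G z, \<rho> z)" for z
  define F' where "F' z h = (G' z h, \<rho>' z h)" for z h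
  have F: "(F has_derivative F' z) (at z)" if "z \<in> S" for z
    unfolding F_def[abs_def] F'_def[abs_def] using G[OF that] \<rho>[OF that] by (rule has_derivative_Pair)
  have F'_bl: "bounded_linear (F' z)" if "z \<in> S" for z
    using F[OF that] by (rule has_derivative_bounded_linear)
  have "inj (F' x)"
  proof (rule injI)
    fix a b assume "F' x a = F' x b"
    then have "F' x (a - b) = 0"
      using F'_bl[OF S(2)] by (simp add: linear_simps)
    then show "a = b"
      using inj[of "a - b"] by (simp add: F'_def zero_prod_def)
  qed
  then obtain g' where g': "linear g'" "g' \<circ> F' x = id"
    using linear_injective_left_inverse F'_bl[OF S(2)] bounded_linear.linear by blast
  have F'_cont: "isCont (\<lambda>z. F' z b) x" for b
    unfolding F'_def by (intro continuous_intros cont)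
  have "\<exists>d>0. \<forall>z. dist x z < d \<longrightarrow> onorm (\<lambda>v. F' z v - F' x v) < e" if "e > 0" for e
    using onorm_diff_small_near[where F' = F', OF S F'_bl F'_cont that] .
  then obtain r where r: "r > 0" "ball x r \<subseteq> S" "inj_on F (ball x r)"
    using has_derivative_locally_injective[OF S(2,1) _ g'(2) F] g'(1) linear_conv_bounded_linear by blast
  have "inj_on G {z \<in> ball x r. \<rho> z = 0}"
    using r(3) by (auto simp: inj_on_def F_def)
  with r(1,2) show ?thesis
    by (rule that)
qed

lemma level_set_local_homeomorphism:
  fixes G :: "'a::euclidean_space \<Rightarrow> 'b::euclidean_space" and \<rho> :: "'a \<Rightarrow> real"
  assumes S: "open S" "x \<in> S" and level: "M \<inter> S = {z \<in> S. \<rho> z = 0}"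
    and G: "\<And>z. z \<in> S \<Longrightarrow> (G has_derivative G' z) (at z)"
    and \<rho>: "\<And>z. z \<in> S \<Longrightarrow> (\<rho> has_derivative \<rho>' z) (at z)"
    and cont: "\<And>h. isCont (\<lambda>z. G' z h) x" "\<And>h. isCont (\<lambda>z. \<rho>' z h) x"
    and inj: "\<And>h. G' x h = 0 \<Longrightarrow> \<rho>' x h = 0 \<Longrightarrow> h = 0"
  obtains r where "r > 0" "ball x r \<subseteq> S" "inj_on G (M \<inter> ball x r)"
    and "continuous_on (G ` (M \<inter> ball x r)) (inv_into (M \<inter> ball x r) G)"
proof -
  obtain r where r: "r > 0" "ball x r \<subseteq> S" "inj_on G {z \<in> ball x r. \<rho> z = 0}"
    using inj_on_level_set_near[OF S G \<rho> cont inj] by blast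
  define K where "K = {z \<in> cball x (r / 2). \<rho> z = 0}"
  have cball: "cball x (r / 2) \<subseteq> S"
    using r(1,2) cball_subset_ball_iff[of x "r / 2" x r] by auto
  have "continuous_on S G" "continuous_on S \<rho>"
    using G \<rho> by (auto intro!: has_derivative_continuous_on intro: has_derivative_at_withinI)
  then have "closed K"
    unfolding K_def by (intro continuous_closed_preimage_constant continuous_on_subset[OF _ cball]) auto
  moreover have "bounded K"
    by (rule bounded_subset[OF bounded_cball[of x "r / 2"]]) (auto simp: K_def)
  ultimately have "compact K"
    by (simp add: compact_eq_bounded_closed)
  have "inj_on G K"
    using r(3) by (rule inj_on_subset) (use r(1) in \<open>auto simp: K_def\<close>)
  have M_ball: "M \<inter> ball x (r / 2) \<subseteq> K"
  proof
    fix z assume z: "z \<in> M \<inter> ball x (r / 2)"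
    then have "z \<in> S"
      using cball by auto
    then show "z \<in> K"
      using level z by (auto simp: K_def)
  qed
  have "continuous_on K G"
    using \<open>continuous_on S G\<close> by (rule continuous_on_subset) (use cball in \<open>auto simp: K_def\<close>)
  show ?thesis
  proof (rule that)
    show "r / 2 > 0" "ball x (r / 2) \<subseteq> S"
      using r(1) cball by auto
    show "inj_on G (M \<inter> ball x (r / 2))"
      using \<open>inj_on G K\<close> M_ball by (rule inj_on_subset)
    show "continuous_on (G ` (M \<inter> ball x (r / 2))) (inv_into (M \<inter> ball x (r / 2)) G)"
      using \<open>continuous_on K G\<close> \<open>compact K\<close> \<open>inj_on G K\<close> M_ball
      by (rule continuous_on_inv_into_compact_subset)
  qed
qed

section \<open>Local embedding of the complex dual map\<close>

lemma tendsto_complex_coeffs [tendsto_intros]: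
  fixes f :: "'a \<Rightarrow> ((complex ^ 'n) \<Rightarrow>\<^sub>L real)"
  assumes "(f \<longlongrightarrow> L) F"
  shows "((\<lambda>z. complex_coeffs (f z)) \<longlongrightarrow> complex_coeffs L) F"
  unfolding complex_coeffs_def by (intro tendsto_vec_lambda tendsto_intros assms)

lemma complex_dual_in_chart:
  assumes "complex_tangent M y = {v. cpair a v = 0}" and "a $ k \<noteq> 0"
  shows "complex_dual M y \<in> chart_dom k" and "dual_chart k (complex_dual M y) = hyperplane_coords k a y"
  using is_chart_coord_hyperplane_coords[OF assms(2), of y] dual_chart_eqI
  unfolding complex_dual_def assms(1) chart_dom_def by blast+

definition local_embedding_dual_at ::
    "(complex ^ 'n) set \<Rightarrow> (complex ^ 'n \<Rightarrow> (complex ^ 'n) set) \<Rightarrow> complex ^ 'n \<Rightarrow> bool" where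
  "local_embedding_dual_at M f x \<longleftrightarrow> (\<exists>V k. open V \<and> x \<in> V \<and> (\<forall>y\<in>M \<inter> V. f y \<in> chart_dom k) \<and>
      (let g = dual_chart k \<circ> f in
        inj_on g (M \<inter> V) \<and>
        continuous_on (M \<inter> V) g \<and>
        continuous_on (g ` (M \<inter> V)) (inv_into (M \<inter> V) g) \<and>
        (\<forall>y\<in>M \<inter> V. \<exists>L. (g has_derivative L) (at y within M) \<and> inj_on L (tangent_space M y))))"

lemma local_embedding_dual_iff: "local_embedding_dual M f \<longleftrightarrow> (\<forall>x\<in>M. local_embedding_dual_at M f x)"
  by (simp add: local_embedding_dual_def local_embedding_dual_at_def)

lemma local_embedding_dual_chartI:
  fixes f :: "complex ^ 'n \<Rightarrow> (complex ^ 'n) set" and G :: "complex ^ 'n \<Rightarrow> complex ^ 'n"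
  assumes V: "open V" "x \<in> V"
    and chart: "\<And>y. y \<in> M \<inter> V \<Longrightarrow> f y \<in> chart_dom k \<and> dual_chart k (f y) = G y"
    and inj: "inj_on G (M \<inter> V)" and inv: "continuous_on (G ` (M \<inter> V)) (inv_into (M \<inter> V) G)"
    and G: "\<And>y. y \<in> V \<Longrightarrow> (G has_derivative G' y) (at y)"
    and G'_inj: "\<And>y. y \<in> M \<inter> V \<Longrightarrow> inj_on (G' y) (tangent_space M y)"
  shows "local_embedding_dual_at M f x"
  unfolding local_embedding_dual_at_def Let_def
proof (intro exI[of _ V] exI[of _ k] conjI ballI)
  let ?g = "dual_chart k \<circ> f"
  have g: "?g y = G y" if "y \<in> M \<inter> V" for y
    using chart[OF that] by simp
  have "continuous_on V G"
    using G by (intro has_derivative_continuous_on) (auto intro: has_derivative_at_withinI)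
  then show "continuous_on (M \<inter> V) ?g"
    using g by (metis continuous_on_cong continuous_on_subset inf_le2)
  show "inj_on ?g (M \<inter> V)"
    using inj g inj_on_cong by blast
  have "inv_into (M \<inter> V) ?g = inv_into (M \<inter> V) G"
  proof
    fix w
    have "(\<lambda>y. y \<in> M \<inter> V \<and> ?g y = w) = (\<lambda>y. y \<in> M \<inter> V \<and> G y = w)"
      using g by auto
    then show "inv_into (M \<inter> V) ?g w = inv_into (M \<inter> V) G w"
      by (simp add: inv_into_def)
  qed
  moreover have "?g ` (M \<inter> V) = G ` (M \<inter> V)"
    by (rule image_cong[OF refl g])
  ultimately show "continuous_on (?g ` (M \<inter> V)) (inv_into (M \<inter> V) ?g)"
    using inv by simp
  fix y assume y: "y \<in> M \<inter> V"
  then show "f y \<in> chart_dom k"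
    using chart by blast
  obtain d where "d > 0" "ball y d \<subseteq> V"
    using V(1) y openE by blast
  then have "(?g has_derivative G' y) (at y within M)"
    using y g by (intro has_derivative_transform_within[OF has_derivative_at_withinI[OF G], of _ d])
      (auto simp: dist_commute subset_iff)
  then show "\<exists>L. (?g has_derivative L) (at y within M) \<and> inj_on L (tangent_space M y)"
    using G'_inj[OF y] by blast
qed (use V in auto)

locale local_defining_function =
  fixes M U :: "(complex ^ 'n) set" and \<rho> :: "complex ^ 'n \<Rightarrow> real"
    and \<rho>' :: "complex ^ 'n \<Rightarrow> ((complex ^ 'n) \<Rightarrow>\<^sub>L real)"
    and \<rho>'' :: "complex ^ 'n \<Rightarrow> ((complex ^ 'n) \<Rightarrow>\<^sub>L ((complex ^ 'n) \<Rightarrow>\<^sub>L real))"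
  assumes open_U: "open U"
    and level: "M \<inter> U = {z \<in> U. \<rho> z = 0}"
    and deriv: "\<And>z. z \<in> U \<Longrightarrow> (\<rho> has_derivative \<rho>' z) (at z)"
    and deriv2: "\<And>z. z \<in> U \<Longrightarrow> (\<rho>' has_derivative \<rho>'' z) (at z)"
    and cont2: "continuous_on U \<rho>''"
    and regular: "\<And>z. z \<in> M \<inter> U \<Longrightarrow> \<rho>' z \<noteq> 0"
begin

abbreviation coeffs :: "complex ^ 'n \<Rightarrow> complex ^ 'n" where
  "coeffs z \<equiv> complex_coeffs (\<rho>' z)"

lemma linear_deriv: "linear (\<rho>' z)"
  by (simp add: blinfun.bounded_linear_right bounded_linear.linear)

lemma deriv_nonzero: "z \<in> M \<inter> U \<Longrightarrow> blinfun_apply (\<rho>' z) \<noteq> (\<lambda>_. 0)"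
  using regular by (metis blinfun_eqI zero_blinfun.rep_eq)

lemma tangent_space_eq: "z \<in> M \<inter> U \<Longrightarrow> tangent_space M z = {v. \<rho>' z v = 0}"
proof -
  have "continuous_on U \<rho>"
    using deriv by (intro has_derivative_continuous_on) (auto intro: has_derivative_at_withinI)
  then show "z \<in> M \<inter> U \<Longrightarrow> ?thesis"
    using tangent_space_regular_level_set[OF open_U _ _ level _ deriv deriv_nonzero] by blast
qed

lemma complex_tangent_eq: "z \<in> M \<inter> U \<Longrightarrow> complex_tangent M z = {v. cpair (coeffs z) v = 0}"
  using complex_tangent_eq_kernel[OF tangent_space_eq linear_deriv] .

lemma has_derivative_dual_chart:
  assumes "z \<in> U" and "coeffs z $ k \<noteq> 0"
  shows "((\<lambda>w. hyperplane_coords k (coeffs w) w) has_derivative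
           (\<lambda>h. hyperplane_coords_deriv k (coeffs z) z (complex_coeffs (\<rho>'' z h)) h)) (at z)"
  using has_derivative_hyperplane_coords[OF has_derivative_complex_coeffs[OF deriv2[OF assms(1)]] assms(2)] .

lemma isCont_coeffs: "z \<in> U \<Longrightarrow> isCont coeffs z"
  using has_derivative_continuous[OF has_derivative_complex_coeffs[OF deriv2]] .

lemma isCont_dual_chart_deriv:
  assumes "x \<in> U" and "coeffs x $ k \<noteq> 0"
  shows "isCont (\<lambda>z. hyperplane_coords_deriv k (coeffs z) z (complex_coeffs (\<rho>'' z h)) h) x"
proof -
  have "isCont \<rho>'' x"
    using cont2 open_U assms(1) by (simp add: continuous_on_eq_continuous_at)
  then show ?thesis
    unfolding isCont_def
    by (intro tendsto_intros isCont_coeffs[OF assms(1), unfolded isCont_def] assms(2)) auto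
qed

lemma coeffs_nonvanishing_nbhd:
  assumes "x \<in> M \<inter> U"
  obtains S k where "open S" "x \<in> S" "S \<subseteq> U" "\<And>z. z \<in> S \<Longrightarrow> coeffs z $ k \<noteq> 0"
proof -
  obtain k where "coeffs x $ k \<noteq> 0"
    using complex_coeffs_nonzero[OF linear_deriv deriv_nonzero[OF assms]] by blast
  moreover have "continuous_on U (\<lambda>z. coeffs z $ k)"
    using isCont_coeffs by (auto intro!: continuous_at_imp_continuous_on)
  ultimately show ?thesis
    using assms open_U by (intro that[of "U \<inter> (\<lambda>z. coeffs z $ k) -` (- {0})" k])
      (auto intro!: continuous_open_preimage)
qed

lemma dual_chart_deriv_injective:
  assumes conv: "strictly_C_convex M" and y: "y \<in> M \<inter> U" and ak: "coeffs y $ k \<noteq> 0"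
    and h: "\<rho>' y h = 0" "hyperplane_coords_deriv k (coeffs y) y (complex_coeffs (\<rho>'' y h)) h = 0"
  shows "h = 0"
proof (rule ccontr)
  assume "h \<noteq> 0"
  obtain V n Dn where V: "open V" "y \<in> V"
    and n: "\<forall>z\<in>M \<inter> V. norm (n z) = 1 \<and> (\<forall>w\<in>tangent_space M z. n z \<bullet> w = 0)"
    and Dn: "(n has_derivative Dn) (at y within M \<inter> V)"
    and pos: "\<forall>v\<in>complex_tangent M y. v \<noteq> 0 \<longrightarrow> - (Dn v \<bullet> v) > 0"
    using conv y unfolding strictly_C_convex_def by blast
  note kernel = hyperplane_coords_deriv_eq_0D[OF ak h(2)]
  have hessian: "\<rho>'' y h h = 0"
  proof -
    have "\<rho>'' y h h = Re (cpair (complex_coeffs (\<rho>'' y h)) h)"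
      by (rule linear_eq_Re_cpair) (simp add: blinfun.bounded_linear_right bounded_linear.linear)
    also have "\<dots> = 0"
      by (subst kernel(1)) (simp add: cpair_scale_left kernel(2))
    finally show ?thesis .
  qed
  have "Dn h \<bullet> h = 0"
  proof (rule second_fundamental_form_vanishes[where W = "V \<inter> U" and M = M and \<rho>' = \<rho>' and n = n])
    show "n z \<bullet> w = 0" if "z \<in> M \<inter> (V \<inter> U)" "\<rho>' z w = 0" for z w
      using that n tangent_space_eq[of z] by auto
    show "(n has_derivative Dn) (at y within M \<inter> (V \<inter> U))"
      using Dn by (rule has_derivative_subset) auto
    show "(\<rho>' has_derivative \<rho>'' y) (at y)"
      using deriv2 y by blast
    show "h \<in> tangent_space M y"
      using tangent_space_eq[OF y] h(1) by simp
  qed (use V open_U y h(1) regular hessian in auto)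
  moreover have "h \<in> complex_tangent M y"
    using complex_tangent_eq[OF y] kernel(2) by simp
  ultimately show False
    using pos \<open>h \<noteq> 0\<close> by auto
qed

lemma complex_dual_local_embedding_at:
  assumes conv: "strictly_C_convex M" and x: "x \<in> M \<inter> U"
  shows "local_embedding_dual_at M (complex_dual M) x"
proof -
  obtain S k where S: "open S" "x \<in> S" "S \<subseteq> U" and akS: "\<And>z. z \<in> S \<Longrightarrow> coeffs z $ k \<noteq> 0"
    using coeffs_nonvanishing_nbhd[OF x] by metis
  define G where "G z = hyperplane_coords k (coeffs z) z" for z
  define G' where "G' z h = hyperplane_coords_deriv k (coeffs z) z (complex_coeffs (\<rho>'' z h)) h" for z h
  have G: "(G has_derivative G' z) (at z)" if "z \<in> S" for z
    unfolding G_def[abs_def] G'_def using has_derivative_dual_chart S(3) akS that by blast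
  have G'_cont: "isCont (\<lambda>z. G' z h) x" for h
    unfolding G'_def using isCont_dual_chart_deriv S akS by blast
  have \<rho>'_cont: "isCont (\<lambda>z. \<rho>' z h) x" for h
    using has_derivative_continuous[OF deriv2] x by (auto intro: continuous_intros)
  have level_S: "M \<inter> S = {z \<in> S. \<rho> z = 0}"
    using level S(3) by auto
  have \<rho>: "(\<rho> has_derivative \<rho>' z) (at z)" if "z \<in> S" for z
    using deriv S(3) that by blast
  have injective: "h = 0" if "y \<in> M \<inter> S" "G' y h = 0" "\<rho>' y h = 0" for y h
    using dual_chart_deriv_injective[OF conv _ akS] that S(3) by (auto simp: G'_def)
  have "x \<in> M \<inter> S"
    using x S(2) by blast
  obtain r where r: "r > 0" "ball x r \<subseteq> S" "inj_on G (M \<inter> ball x r)"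
    and inv: "continuous_on (G ` (M \<inter> ball x r)) (inv_into (M \<inter> ball x r) G)"
    using level_set_local_homeomorphism[OF S(1,2) level_S G \<rho> G'_cont \<rho>'_cont injective[OF \<open>x \<in> M \<inter> S\<close>]]
    by blast
  show ?thesis
  proof (rule local_embedding_dual_chartI[OF _ _ _ r(3) inv])
    show "complex_dual M y \<in> chart_dom k \<and> dual_chart k (complex_dual M y) = G y"
      if "y \<in> M \<inter> ball x r" for y
    proof -
      have "y \<in> M \<inter> U" "y \<in> S"
        using that r(2) S(3) by auto
      then show ?thesis
        using complex_dual_in_chart[OF complex_tangent_eq akS] by (simp add: G_def)
    qed
    show "inj_on (G' y) (tangent_space M y)" if "y \<in> M \<inter> ball x r" for y
    proof (rule inj_onI)
      fix a b assume ab: "a \<in> tangent_space M y" "b \<in> tangent_space M y" "G' y a = G' y b"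
      have y: "y \<in> M \<inter> U" "y \<in> S"
        using that r(2) S(3) by auto
      have "G' y (a - b) = 0"
        using ab(3) linear_diff[OF has_derivative_linear[OF G[OF y(2)]]] by simp
      moreover have "\<rho>' y (a - b) = 0"
        using ab(1,2) tangent_space_eq[OF y(1)] by (simp add: blinfun.diff_right)
      ultimately show "a = b"
        using injective[of y "a - b"] y by simp
    qed
  qed (use r G in auto)
qed

end

lemma strictly_C_convex_local_defining_function:
  assumes "strictly_C_convex M" and "x \<in> M"
  obtains U \<rho> \<rho>' \<rho>'' where "x \<in> U" "local_defining_function M U \<rho> \<rho>' \<rho>''"
proof -
  obtain U \<rho> where U: "open U" "x \<in> U" "C2_on U \<rho>" "M \<inter> U = {y\<in>U. \<rho> y = 0}"
    and reg: "\<forall>y\<in>M \<inter> U. \<exists>L. (\<rho> has_derivative L) (at y) \<and> L \<noteq> (\<lambda>_. 0)"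
    using assms unfolding strictly_C_convex_def real_hypersurface_def by blast
  obtain \<rho>' \<rho>'' where d1: "\<forall>y\<in>U. (\<rho> has_derivative blinfun_apply (\<rho>' y)) (at y)"
    and "\<forall>y\<in>U. (\<rho>' has_derivative blinfun_apply (\<rho>'' y)) (at y)" "continuous_on U \<rho>''"
    using U(3) unfolding C2_on_def by blast
  moreover have "\<rho>' y \<noteq> 0" if "y \<in> M \<inter> U" for y
    using reg d1 that has_derivative_unique by (metis IntD2 zero_blinfun.rep_eq)
  ultimately show ?thesis
    using U by (intro that[of U \<rho> \<rho>' \<rho>'']) (auto simp: local_defining_function_def)
qed

theorem lemma2:
  fixes M :: "(complex ^ 'n) set"
  assumes "strictly_C_convex M"
  shows "local_embedding_dual M (complex_dual M)"
  unfolding local_embedding_dual_iff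
proof
  fix x assume "x \<in> M"
  with assms obtain U \<rho> \<rho>' \<rho>'' where "x \<in> U" "local_defining_function M U \<rho> \<rho>' \<rho>''"
    by (rule strictly_C_convex_local_defining_function)
  then show "local_embedding_dual_at M (complex_dual M) x"
    using local_defining_function.complex_dual_local_embedding_at[OF _ assms] \<open>x \<in> M\<close> by blast
qed

end
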